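(* Let $n$ be even and $S\ge2$. Any deterministic AMPC algorithm with I/O capacity $S$ that computes $\mathrm{1v2Cycle}$ on $n$ vertices requires at least $\frac13\log_S n-\frac13\log_S 32=\Omega(\log_S n)$ rounds. In particular, if $S=n^{\epsilon}$ for $\epsilon\in(0,1)$, any such algorithm requires $\Omega(1/\epsilon)$ rounds.
   Context: Graphs on vertex set $\{1,\dots,n\}$ are encoded as $x\in\{0,1\}^N$, $N=\binom n2$, one bit per unordered pair (adjacency matrix). $\mathrm{1v2Cycle}:\Delta\to\{0,1\}$ is defined on the set $\Delta$ of graphs that are either a single $n$-cycle (value $1$) or a disjoint union of two cycles of length $n/2$ (value $0$). AMPC model with I/O capacity $S$: computation proceeds in rounds communicating through distributed data stores (DDS) $\mathcal{D}_0,\dots,\mathcal{D}_R$, each storing under each key a multiset of values (possibly empty; duplicates allowed, each value written by a unique machine). On input $x$, $\mathcal{D}_0$ consists of the pairs $(i,x_i)$, $i=1,\dots,N$. In round $r\ge1$ each machine (arbitrarily many, computationally unbounded, deterministic) adaptively queries keys of $\mathcal{D}_{r-1}$, receiving the whole multiset under the key, with later queries depending arbitrarily on earlier ones and their responses; the total number of values in responses plus the number of empty-response queries is at most $S$; it then writes at most $S$ key-value pairs to $\mathcal{D}_r$ as a function of its queries and responses. The algorithm is also run on invalid inputs $x\in\{0,1\}^N\setminus\Delta$ (a machine exceeding its budget stops and writes nothing), and in every round, on every input in $\{0,1\}^N$, at most $S$ values are written under any single key. The algorithm computes $g$ in $R$ rounds if for every $x\in\Delta$, $\mathcal{D}_R$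 contains exactly the single pair $(\textsc{answer},g(x))$. *)

theory Defs
  imports Main "HOL-Library.Multiset" Complex_Main
begin

text \<open>Unordered pairs {i,j}, 1 <= i < j <= n, are numbered 1..N (N = n choose 2) in
  row-major order of the upper triangle of the adjacency matrix:
  (1,2),(1,3),...,(1,n),(2,3),...,(n-1,n).\<close>

definition pair_idx :: "nat \<Rightarrow> nat \<Rightarrow> nat \<Rightarrow> nat" where
  "pair_idx n i j = (\<Sum>a\<in>{1..<i}. n - a) + (j - i)"

text \<open>An input is a bit string x in {0,1}^N, modelled as x :: nat => bool
  of which only the bits x 1, ..., x N are used.\<close>

definition edge :: "nat \<Rightarrow> (nat \<Rightarrow> bool) \<Rightarrow> nat \<Rightarrow> nat \<Rightarrow> bool" where
  "edge n x u v \<longleftrightarrow> u \<noteq> v \<and> x (pair_idx n (min u v) (max u v))"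

definition cyc_adj :: "nat \<Rightarrow> (nat \<Rightarrow> nat) \<Rightarrow> nat \<Rightarrow> nat \<Rightarrow> bool" where
  "cyc_adj L \<sigma> u v \<longleftrightarrow>
     (\<exists>i<L. (u = \<sigma> i \<and> v = \<sigma> ((i + 1) mod L)) \<or> (v = \<sigma> i \<and> u = \<sigma> ((i + 1) mod L)))"

definition one_cycle :: "nat \<Rightarrow> (nat \<Rightarrow> bool) \<Rightarrow> bool" where
  "one_cycle n x \<longleftrightarrow> n \<ge> 3 \<and>
     (\<exists>\<sigma>. bij_betw \<sigma> {..<n} {1..n} \<and>
        (\<forall>u\<in>{1..n}. \<forall>v\<in>{1..n}. edge n x u v \<longleftrightarrow> cyc_adj n \<sigma> u v))"

definition two_cycles :: "nat \<Rightarrow> (nat \<Rightarrow> bool) \<Rightarrow> bool" where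
  "two_cycles n x \<longleftrightarrow> even n \<and> n div 2 \<ge> 3 \<and>
     (\<exists>\<sigma>. bij_betw \<sigma> {..<n} {1..n} \<and>
        (\<forall>u\<in>{1..n}. \<forall>v\<in>{1..n}. edge n x u v \<longleftrightarrow>
            (cyc_adj (n div 2) \<sigma> u v \<or> cyc_adj (n div 2) (\<lambda>i. \<sigma> (n div 2 + i)) u v)))"

text \<open>The promise set Delta and the function 1v2Cycle (True = 1, False = 0).\<close>
definition Delta :: "nat \<Rightarrow> (nat \<Rightarrow> bool) \<Rightarrow> bool" where
  "Delta n x \<longleftrightarrow> one_cycle n x \<or> two_cycles n x"

definition one_v_two_cycle :: "nat \<Rightarrow> (nat \<Rightarrow> bool) \<Rightarrow> bool" where
  "one_v_two_cycle n x = one_cycle n x"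

datatype 'k dkey = InKey nat | Answer | Key 'k
datatype 'w dval = Bit bool | Val 'w

type_synonym ('k, 'w) dds = "'k dkey \<Rightarrow> 'w dval multiset"
type_synonym ('k, 'w) hist = "('k dkey \<times> 'w dval multiset) list"

datatype ('k, 'w) action = Query "'k dkey" | Write "('k dkey \<times> 'w dval) list"

text \<open>A deterministic adaptive machine: its next action is a function of the
  queries made so far and their responses.\<close>
type_synonym ('k, 'w) strategy = "('k, 'w) hist \<Rightarrow> ('k, 'w) action"

definition hist_cost :: "('k, 'w) hist \<Rightarrow> nat" where
  "hist_cost h = sum_list (map (\<lambda>(k, M). if M = {#} then 1 else size M) h)"

text \<open>Running a machine with I/O capacity S (fuel bounds the number of queries;
  since each query costs at least 1, fuel S+1 is never exhausted). A machine
  exceeding its budget stops and writes nothing.\<close>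
fun run_machine :: "nat \<Rightarrow> nat \<Rightarrow> ('k, 'w) strategy \<Rightarrow> ('k, 'w) dds \<Rightarrow> ('k, 'w) hist
    \<Rightarrow> ('k dkey \<times> 'w dval) list" where
  "run_machine S 0 P D h = []"
| "run_machine S (Suc f) P D h =
     (case P h of
        Write ws \<Rightarrow> ws
      | Query k \<Rightarrow> (let h' = h @ [(k, D k)] in
                     if hist_cost h' > S then [] else run_machine S f P D h'))"

definition machine_output :: "nat \<Rightarrow> ('k, 'w) strategy \<Rightarrow> ('k, 'w) dds \<Rightarrow> ('k dkey \<times> 'w dval) list" where
  "machine_output S P D = run_machine S (Suc S) P D []"

definition round_dds :: "nat \<Rightarrow> ('m::finite \<Rightarrow> ('k, 'w) strategy) \<Rightarrow> ('k, 'w) dds \<Rightarrow> ('k, 'w) dds" where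
  "round_dds S M D = (\<lambda>k. \<Sum>m\<in>UNIV. mset (map snd (filter (\<lambda>p. fst p = k) (machine_output S (M m) D))))"

definition input_dds :: "nat \<Rightarrow> (nat \<Rightarrow> bool) \<Rightarrow> ('k, 'w) dds" where
  "input_dds n x = (\<lambda>k. case k of
      InKey i \<Rightarrow> (if 1 \<le> i \<and> i \<le> n choose 2 then {#Bit (x i)#} else {#})
    | _ \<Rightarrow> {#})"

text \<open>An algorithm A assigns to each round r >= 1 the programs of its machines.
  dds_at S n A x r is D_r on input x.\<close>
fun dds_at :: "nat \<Rightarrow> nat \<Rightarrow> (nat \<Rightarrow> 'm::finite \<Rightarrow> ('k, 'w) strategy) \<Rightarrow> (nat \<Rightarrow> bool)
    \<Rightarrow> nat \<Rightarrow> ('k, 'w) dds" where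
  "dds_at S n A x 0 = input_dds n x"
| "dds_at S n A x (Suc r) = round_dds S (A (Suc r)) (dds_at S n A x r)"

definition ampc_valid :: "nat \<Rightarrow> nat \<Rightarrow> (nat \<Rightarrow> 'm::finite \<Rightarrow> ('k, 'w) strategy) \<Rightarrow> nat \<Rightarrow> bool" where
  "ampc_valid S n A R \<longleftrightarrow>
     (\<forall>r m h ws. 1 \<le> r \<and> r \<le> R \<and> A r m h = Write ws \<longrightarrow> length ws \<le> S) \<and>
     (\<forall>x r k. 1 \<le> r \<and> r \<le> R \<longrightarrow> size (dds_at S n A x r k) \<le> S)"

definition ampc_computes :: "nat \<Rightarrow> nat \<Rightarrow> (nat \<Rightarrow> 'm::finite \<Rightarrow> ('k, 'w) strategy) \<Rightarrow> nat
    \<Rightarrow> ((nat \<Rightarrow> bool) \<Rightarrow> bool) \<Rightarrow> ((nat \<Rightarrow> bool) \<Rightarrow> bool) \<Rightarrow> bool" where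
  "ampc_computes S n A R Dom g \<longleftrightarrow>
     (\<forall>x. Dom x \<longrightarrow> dds_at S n A x R = (\<lambda>k. if k = Answer then {#Bit (g x)#} else {#}))"

end

theory Submission
  imports Defs
begin

text \<open>Identify a point of \<open>{0,1}\<^sup>L\<close> with a set \<open>T \<subseteq> {..<L}\<close>. If every input bit is a
  function of a single coordinate of \<open>T\<close>, then every indicator \<open>[D\<^sub>r(k) = V]\<close> is a multilinear
  polynomial in \<open>T\<close> of degree at most \<open>(S(S+1))\<^sup>r\<close>: a machine makes at most \<open>S + 1\<close> adaptive
  queries, and a key holding at most \<open>S\<close> values is determined by polynomials of degree \<open>S\<close> in the
  size and the multiplicities of its multiset. The ladder on \<open>2L + 2\<close> vertices whose \<open>i\<close>-th step
  is crossed iff \<open>i \<in> T\<close> is one cycle if \<open>|T|\<close> is odd and two \<open>(L+1)\<close>-cycles otherwise, and each of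
  its bits depends on one coordinate of \<open>T\<close>. An \<open>R\<close>-round algorithm for 1v2Cycle thus computes
  the parity of \<open>T\<close>, whose degree is \<open>L\<close>, so \<open>L \<le> (S(S+1))\<^sup>R \<le> S\<^sup>3\<^sup>R\<close>.\<close>

section \<open>Polynomials on the Boolean cube\<close>

definition small_subsets :: "nat \<Rightarrow> nat \<Rightarrow> nat set set" where
  "small_subsets L d = {U. U \<subseteq> {..<L} \<and> card U \<le> d}"

text \<open>With points of the cube read as sets \<open>T\<close>, \<open>of_bool (U \<subseteq> T)\<close> is the monomial \<open>\<Prod>i\<in>U. x\<^sub>i\<close>.\<close>

definition cube_deg_le :: "nat \<Rightarrow> nat \<Rightarrow> (nat set \<Rightarrow> real) \<Rightarrow> bool" where
  "cube_deg_le L d g \<longleftrightarrow>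
     (\<exists>c. \<forall>T\<subseteq>{..<L}. g T = (\<Sum>U\<in>small_subsets L d. c U * of_bool (U \<subseteq> T)))"

lemma finite_small_subsets [simp]: "finite (small_subsets L d)"
  unfolding small_subsets_def by (rule finite_subset[of _ "Pow {..<L}"]) auto

lemma cube_deg_le_cong:
  "cube_deg_le L d f \<Longrightarrow> (\<And>T. T \<subseteq> {..<L} \<Longrightarrow> f T = g T) \<Longrightarrow> cube_deg_le L d g"
  unfolding cube_deg_le_def by metis

lemma cube_deg_le_mono:
  assumes "cube_deg_le L d g" "d \<le> d'"
  shows "cube_deg_le L d' g"
proof -
  obtain c where c: "\<And>T. T \<subseteq> {..<L} \<Longrightarrow> g T = (\<Sum>U\<in>small_subsets L d. c U * of_bool (U \<subseteq> T))"
    using assms(1) unfolding cube_deg_le_def by blast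
  define c' where "c' U = (if U \<in> small_subsets L d then c U else 0)" for U
  have sub: "small_subsets L d \<subseteq> small_subsets L d'"
    using assms(2) by (auto simp: small_subsets_def)
  have "g T = (\<Sum>U\<in>small_subsets L d'. c' U * of_bool (U \<subseteq> T))" if "T \<subseteq> {..<L}" for T
    unfolding c[OF that]
    by (rule sum.mono_neutral_cong_left[OF finite_small_subsets sub]) (simp_all add: c'_def)
  then show ?thesis
    unfolding cube_deg_le_def by blast
qed

lemma cube_deg_le_const: "cube_deg_le L d (\<lambda>_. a)"
proof -
  have "small_subsets L 0 = {{}}"
    by (auto simp: small_subsets_def card_eq_0_iff dest: finite_subset[OF _ finite_lessThan])
  then have "cube_deg_le L 0 (\<lambda>_. a)"
    unfolding cube_deg_le_def by (intro exI[of _ "\<lambda>_. a"]) simp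
  then show ?thesis
    by (rule cube_deg_le_mono) simp
qed

lemma cube_deg_le_add:
  assumes "cube_deg_le L d f" "cube_deg_le L d g"
  shows "cube_deg_le L d (\<lambda>T. f T + g T)"
proof -
  obtain a where a: "\<And>T. T \<subseteq> {..<L} \<Longrightarrow> f T = (\<Sum>U\<in>small_subsets L d. a U * of_bool (U \<subseteq> T))"
    using assms(1) unfolding cube_deg_le_def by blast
  obtain b where b: "\<And>T. T \<subseteq> {..<L} \<Longrightarrow> g T = (\<Sum>U\<in>small_subsets L d. b U * of_bool (U \<subseteq> T))"
    using assms(2) unfolding cube_deg_le_def by blast
  show ?thesis
    unfolding cube_deg_le_def
    by (intro exI[of _ "\<lambda>U. a U + b U"]) (simp add: a b distrib_right sum.distrib del: sum_mult_of_bool_eq)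
qed

lemma cube_deg_le_cmult:
  assumes "cube_deg_le L d f"
  shows "cube_deg_le L d (\<lambda>T. a * f T)"
proof -
  obtain c where c: "\<And>T. T \<subseteq> {..<L} \<Longrightarrow> f T = (\<Sum>U\<in>small_subsets L d. c U * of_bool (U \<subseteq> T))"
    using assms unfolding cube_deg_le_def by blast
  show ?thesis
    unfolding cube_deg_le_def
    by (intro exI[of _ "\<lambda>U. a * c U"]) (simp add: c sum_distrib_left mult.assoc del: sum_mult_of_bool_eq)
qed

lemma cube_deg_le_affine:
  assumes "cube_deg_le L d f"
  shows "cube_deg_le L d (\<lambda>T. (f T - a) / b)"
proof -
  have "cube_deg_le L d (\<lambda>T. (1 / b) * f T + (- a / b))"
    using assms by (intro cube_deg_le_add cube_deg_le_cmult cube_deg_le_const)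
  then show ?thesis
    by (rule cube_deg_le_cong) (simp add: diff_divide_distrib)
qed

lemma cube_deg_le_sum:
  "finite I \<Longrightarrow> (\<And>i. i \<in> I \<Longrightarrow> cube_deg_le L d (f i)) \<Longrightarrow> cube_deg_le L d (\<lambda>T. \<Sum>i\<in>I. f i T)"
  by (induction I rule: finite_induct) (simp_all add: cube_deg_le_const cube_deg_le_add)

lemma cube_deg_le_monomial:
  assumes "U \<subseteq> {..<L}"
  shows "cube_deg_le L (card U) (\<lambda>T. of_bool (U \<subseteq> T))"
proof -
  have "U \<in> small_subsets L (card U)"
    using assms by (simp add: small_subsets_def)
  then show ?thesis
    unfolding cube_deg_le_def
    by (intro exI[of _ "\<lambda>W. of_bool (W = U)"]) (simp add: sum.delta)
qed

lemma cube_deg_le_mult: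
  assumes "cube_deg_le L d f" "cube_deg_le L e g"
  shows "cube_deg_le L (d + e) (\<lambda>T. f T * g T)"
proof -
  obtain a where a: "\<And>T. T \<subseteq> {..<L} \<Longrightarrow> f T = (\<Sum>U\<in>small_subsets L d. a U * of_bool (U \<subseteq> T))"
    using assms(1) unfolding cube_deg_le_def by blast
  obtain b where b: "\<And>T. T \<subseteq> {..<L} \<Longrightarrow> g T = (\<Sum>U\<in>small_subsets L e. b U * of_bool (U \<subseteq> T))"
    using assms(2) unfolding cube_deg_le_def by blast
  have "cube_deg_le L (d + e)
      (\<lambda>T. \<Sum>U\<in>small_subsets L d. \<Sum>W\<in>small_subsets L e. (a U * b W) * of_bool (U \<union> W \<subseteq> T))"
  proof (intro cube_deg_le_sum cube_deg_le_cmult finite_small_subsets)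
    fix U W assume "U \<in> small_subsets L d" "W \<in> small_subsets L e"
    then have "card (U \<union> W) \<le> d + e" "U \<union> W \<subseteq> {..<L}"
      using card_Un_le[of U W] by (auto simp: small_subsets_def)
    then show "cube_deg_le L (d + e) (\<lambda>T. of_bool (U \<union> W \<subseteq> T))"
      using cube_deg_le_monomial cube_deg_le_mono by blast
  qed
  then show ?thesis
    by (rule cube_deg_le_cong)
      (simp add: a b sum_product of_bool_conj mult_ac del: sum_mult_of_bool_eq sum_of_bool_mult_eq)
qed

lemma cube_deg_le_prod:
  "finite I \<Longrightarrow> (\<And>i. i \<in> I \<Longrightarrow> cube_deg_le L (d i) (f i)) \<Longrightarrow>
    cube_deg_le L (\<Sum>i\<in>I. d i) (\<lambda>T. \<Prod>i\<in>I. f i T)"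
  by (induction I rule: finite_induct) (simp_all add: cube_deg_le_const cube_deg_le_mult)

definition depends_only_on :: "nat \<Rightarrow> (nat set \<Rightarrow> 'a) \<Rightarrow> bool" where
  "depends_only_on j f \<longleftrightarrow> (\<forall>T T'. (j \<in> T \<longleftrightarrow> j \<in> T') \<longrightarrow> f T = f T')"

lemma depends_only_on_comp: "depends_only_on j f \<Longrightarrow> depends_only_on j (\<lambda>T. g (f T))"
  unfolding depends_only_on_def by metis

lemma cube_deg_le_depends_only_on:
  assumes "j < L" "depends_only_on j f"
  shows "cube_deg_le L 1 f"
proof -
  have "cube_deg_le L 1 (\<lambda>T. f {} + (f {j} - f {}) * of_bool ({j} \<subseteq> T))"
    using cube_deg_le_monomial[of "{j}" L] assms(1)
    by (intro cube_deg_le_add cube_deg_le_cmult cube_deg_le_const) auto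
  then show ?thesis
  proof (rule cube_deg_le_cong)
    fix T
    have "f T = (if j \<in> T then f {j} else f {})"
      using assms(2) unfolding depends_only_on_def by (metis empty_iff singletonI)
    then show "f {} + (f {j} - f {}) * of_bool ({j} \<subseteq> T) = f T"
      by simp
  qed
qed

lemma cube_deg_le_bind:
  assumes "\<And>V. cube_deg_le L d (\<lambda>T. of_bool (D T = V))" "\<And>V. cube_deg_le L e (G V)"
  shows "cube_deg_le L (d + e) (\<lambda>T. G (D T) T)"
proof -
  have "cube_deg_le L (d + e) (\<lambda>T. \<Sum>V\<in>D ` Pow {..<L}. of_bool (D T = V) * G V T)"
    by (intro cube_deg_le_sum cube_deg_le_mult assms) simp
  then show ?thesis
  proof (rule cube_deg_le_cong)
    fix T assume "T \<subseteq> {..<L}"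
    then have "D ` Pow {..<L} \<inter> {V. D T = V} = {D T}"
      by (auto intro!: imageI)
    then show "(\<Sum>V\<in>D ` Pow {..<L}. of_bool (D T = V) * G V T) = G (D T) T"
      by simp
  qed
qed

lemma cube_deg_le_comp:
  assumes "\<And>V. cube_deg_le L d (\<lambda>T. of_bool (D T = V))"
  shows "cube_deg_le L d (\<lambda>T. \<phi> (D T))"
  using cube_deg_le_bind[OF assms cube_deg_le_const, of 0 \<phi>] by simp

lemma sum_alternating_supersets:
  assumes "finite S" "U \<subset> S"
  shows "(\<Sum>T | T \<subseteq> S \<and> U \<subseteq> T. (-1) ^ card T) = (0::'a::ring_1)"
  using assms by (intro sum_alternating_cancels) (simp_all add: card_subsupersets_even_odd conj_assoc)

lemma cube_deg_le_alternating_sum: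
  assumes "cube_deg_le L d g" "d < L"
  shows "(\<Sum>T\<in>Pow {..<L}. (-1) ^ card T * g T) = 0"
proof -
  obtain c where c: "\<And>T. T \<subseteq> {..<L} \<Longrightarrow> g T = (\<Sum>U\<in>small_subsets L d. c U * of_bool (U \<subseteq> T))"
    using assms(1) unfolding cube_deg_le_def by blast
  have "(\<Sum>T\<in>Pow {..<L}. (-1) ^ card T * g T)
      = (\<Sum>T\<in>Pow {..<L}. \<Sum>U\<in>small_subsets L d. c U * ((-1) ^ card T * of_bool (U \<subseteq> T)))"
    by (intro sum.cong) (simp_all add: c sum_distrib_left mult_ac del: sum_mult_of_bool_eq)
  also have "\<dots> = (\<Sum>U\<in>small_subsets L d. c U * (\<Sum>T\<in>Pow {..<L}. (-1) ^ card T * of_bool (U \<subseteq> T)))"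
    by (subst sum.swap) (simp only: sum_distrib_left)
  also have "\<dots> = 0"
  proof (intro sum.neutral ballI)
    fix U assume "U \<in> small_subsets L d"
    then have "U \<subset> {..<L}"
      using assms(2) by (auto simp: small_subsets_def)
    then show "c U * (\<Sum>T\<in>Pow {..<L}. (-1) ^ card T * of_bool (U \<subseteq> T)) = 0"
      using sum_alternating_supersets[of "{..<L}" U, where 'a = real] by (simp add: Pow_def Int_def)
  qed
  finally show ?thesis .
qed

lemma parity_not_cube_deg_le:
  assumes "d < L"
  shows "\<not> cube_deg_le L d (\<lambda>T. of_bool (odd (card T)))"
proof
  assume "cube_deg_le L d (\<lambda>T. of_bool (odd (card T)))"
  then have "(\<Sum>T\<in>Pow {..<L}. (-1) ^ card T * of_bool (odd (card T)) :: real) = 0"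
    using assms by (rule cube_deg_le_alternating_sum)
  moreover have "(\<Sum>T\<in>Pow {..<L}. (-1) ^ card T * of_bool (odd (card T)) :: real)
      = - (\<Sum>T\<in>Pow {..<L}. of_bool (odd (card T)))"
    by (simp add: sum_negf[symmetric])
  moreover have "(\<Sum>T\<in>Pow {..<L}. of_bool (odd (card T)) :: real) \<ge> of_bool (odd (card {0::nat}))"
    using assms by (intro member_le_sum) auto
  ultimately show False
    by simp
qed

section \<open>Degree of AMPC computations\<close>

lemma cube_deg_le_run_machine:
  fixes D :: "nat set \<Rightarrow> ('k, 'w) dds"
  assumes "\<And>k V. cube_deg_le L d (\<lambda>T. of_bool (D T k = V))"
  shows "cube_deg_le L (f * d) (\<lambda>T. of_bool (run_machine S f P (D T) h = ws))"
proof (induction f arbitrary: h)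
  case 0
  show ?case
    by (simp add: cube_deg_le_const)
next
  case (Suc f)
  show ?case
  proof (cases "P h")
    case (Write ws')
    then show ?thesis
      by (simp add: cube_deg_le_const)
  next
    case (Query k)
    define G :: "'w dval multiset \<Rightarrow> nat set \<Rightarrow> real"
      where "G V T = of_bool ((if S < hist_cost (h @ [(k, V)]) then []
        else run_machine S f P (D T) (h @ [(k, V)])) = ws)" for V T
    have "cube_deg_le L (f * d) (G V)" for V
      unfolding G_def by (cases "S < hist_cost (h @ [(k, V)])") (simp_all add: cube_deg_le_const Suc.IH)
    then have "cube_deg_le L (d + f * d) (\<lambda>T. G (D T k) T)"
      using assms by (intro cube_deg_le_bind)
    then show ?thesis
      using Query by (simp add: G_def Let_def)
  qed
qed

lemma cube_deg_le_machine_output: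
  assumes "\<And>k V. cube_deg_le L d (\<lambda>T. of_bool (D T k = V))"
  shows "cube_deg_le L ((S + 1) * d) (\<lambda>T. of_bool (machine_output S P (D T) = ws))"
  unfolding machine_output_def using cube_deg_le_run_machine[OF assms, of "Suc S"] by simp

text \<open>Among multisets of size at most \<open>S\<close>, equality with \<open>V\<close> is a polynomial of degree \<open>S\<close> in the size
  and the multiplicities: the first product vanishes iff \<open>D\<close> is larger than \<open>V\<close>, the second one iff
  \<open>D\<close> has fewer copies than \<open>V\<close> of some element.\<close>

lemma of_bool_mset_eq_prod:
  fixes D V :: "'a multiset"
  assumes "size D \<le> S" "size V \<le> S"
  shows "of_bool (D = V) =
    (\<Prod>j\<in>{size V<..S}. (real (size D) - real j) / (real (size V) - real j)) *
    (\<Prod>v\<in>set_mset V. \<Prod>i<count V v. (real (count D v) - real i) / (real (count V v) - real i))"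
proof (cases "D = V")
  case True
  then show ?thesis
    by (simp add: prod.neutral)
next
  case False
  show ?thesis
  proof (cases "size V < size D")
    case True
    then show ?thesis
      using assms False by (simp add: prod_zero_iff)
  next
    case size_le: False
    have "\<not> V \<subseteq># D"
      using False size_le mset_subset_size[of V D] by (metis not_le subset_mset.le_less)
    then obtain v where "v \<in># V" "count D v < count V v"
      by (metis count_eq_zero_iff le0 not_le subseteq_mset_def)
    then show ?thesis
      using False by (simp add: prod_zero_iff) blast
  qed
qed

lemma cube_deg_le_round_dds_size_count:
  assumes "\<And>k V. cube_deg_le L d (\<lambda>T. of_bool (D T k = V))"
  shows "cube_deg_le L ((S + 1) * d) (\<lambda>T. real (size (round_dds S M (D T) k)))"
    and "cube_deg_le L ((S + 1) * d) (\<lambda>T. real (count (round_dds S M (D T) k) v))"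
proof -
  define out where "out m T = machine_output S (M m) (D T)" for m T
  have out: "cube_deg_le L ((S + 1) * d) (\<lambda>T. of_bool (out m T = ws))" for m ws
    unfolding out_def using assms by (rule cube_deg_le_machine_output)
  have round: "round_dds S M (D T) k = (\<Sum>m\<in>UNIV. mset (map snd (filter (\<lambda>p. fst p = k) (out m T))))" for T
    by (simp add: round_dds_def out_def)
  have "cube_deg_le L ((S + 1) * d)
      (\<lambda>T. \<Sum>m\<in>UNIV. (\<lambda>ws. real (size (mset (map snd (filter (\<lambda>p. fst p = k) ws))))) (out m T))"
    by (intro cube_deg_le_sum cube_deg_le_comp[OF out]) simp
  then show "cube_deg_le L ((S + 1) * d) (\<lambda>T. real (size (round_dds S M (D T) k)))"
    by (rule cube_deg_le_cong) (simp add: round)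
  have "cube_deg_le L ((S + 1) * d)
      (\<lambda>T. \<Sum>m\<in>UNIV. (\<lambda>ws. real (count (mset (map snd (filter (\<lambda>p. fst p = k) ws))) v)) (out m T))"
    by (intro cube_deg_le_sum cube_deg_le_comp[OF out]) simp
  then show "cube_deg_le L ((S + 1) * d) (\<lambda>T. real (count (round_dds S M (D T) k) v))"
    by (rule cube_deg_le_cong) (simp add: round count_sum)
qed

lemma cube_deg_le_round_dds:
  assumes D: "\<And>k V. cube_deg_le L d (\<lambda>T. of_bool (D T k = V))"
    and cap: "\<And>T. T \<subseteq> {..<L} \<Longrightarrow> size (round_dds S M (D T) k) \<le> S"
  shows "cube_deg_le L (S * ((S + 1) * d)) (\<lambda>T. of_bool (round_dds S M (D T) k = V))"
proof -
  define e where "e = (S + 1) * d"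
  have size: "cube_deg_le L e (\<lambda>T. real (size (round_dds S M (D T) k)))"
    unfolding e_def using D by (rule cube_deg_le_round_dds_size_count)
  have count: "cube_deg_le L e (\<lambda>T. real (count (round_dds S M (D T) k) v))" for v
    unfolding e_def using D by (rule cube_deg_le_round_dds_size_count)
  show ?thesis
  proof (cases "size V \<le> S")
    case False
    have "cube_deg_le L 0 (\<lambda>T. of_bool (round_dds S M (D T) k = V))"
      using cube_deg_le_const[of L 0 0] by (rule cube_deg_le_cong) (use cap False in auto)
    then show ?thesis
      by (rule cube_deg_le_mono) simp
  next
    case True
    have "(\<Sum>v\<in>set_mset V. \<Sum>i<count V v. e) = size V * e"
      by (simp add: size_multiset_overloaded_eq sum_distrib_right)
    then have degree: "(\<Sum>j\<in>{size V<..S}. e) + (\<Sum>v\<in>set_mset V. \<Sum>i<count V v. e) = S * ((S + 1) * d)"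
      using True by (simp add: e_def flip: add_mult_distrib)
    have "cube_deg_le L (S * ((S + 1) * d))
      (\<lambda>T. (\<Prod>j\<in>{size V<..S}. (real (size (round_dds S M (D T) k)) - real j) / (real (size V) - real j)) *
        (\<Prod>v\<in>set_mset V. \<Prod>i<count V v.
          (real (count (round_dds S M (D T) k) v) - real i) / (real (count V v) - real i)))"
      unfolding degree[symmetric] by (intro cube_deg_le_mult cube_deg_le_prod cube_deg_le_affine size count) auto
    then show ?thesis
      by (rule cube_deg_le_cong) (simp add: of_bool_mset_eq_prod[OF cap True])
  qed
qed

lemma cube_deg_le_dds_at:
  fixes A :: "nat \<Rightarrow> 'm::finite \<Rightarrow> ('k, 'w) strategy"
  assumes input: "\<And>i. \<exists>j<L. depends_only_on j (\<lambda>T. X T i)"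
    and valid: "ampc_valid S n A R"
    and "r \<le> R"
  shows "cube_deg_le L ((S * (S + 1)) ^ r) (\<lambda>T. of_bool (dds_at S n A (X T) r k = V))"
  using \<open>r \<le> R\<close>
proof (induction r arbitrary: k V)
  case 0
  show ?case
  proof (cases k)
    case (InKey i)
    obtain j where "j < L" and dep: "depends_only_on j (\<lambda>T. X T i)"
      using input by blast
    have "cube_deg_le L 1 (\<lambda>T. (\<lambda>b. of_bool ((if 1 \<le> i \<and> i \<le> n choose 2 then {#Bit b#} else {#}) = V)) (X T i))"
      using \<open>j < L\<close> depends_only_on_comp[OF dep] by (rule cube_deg_le_depends_only_on)
    then show ?thesis
      by (simp add: InKey input_dds_def)
  qed (simp_all add: input_dds_def cube_deg_le_const)
next
  case (Suc r)
  have "size (dds_at S n A (X T) (Suc r) k) \<le> S" for T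
    using valid Suc.prems Suc_le_mono[of 0 r] unfolding ampc_valid_def One_nat_def by blast
  then have "cube_deg_le L (S * ((S + 1) * (S * (S + 1)) ^ r))
      (\<lambda>T. of_bool (round_dds S (A (Suc r)) (dds_at S n A (X T) r) k = V))"
    using Suc.IH Suc.prems by (intro cube_deg_le_round_dds) simp_all
  then show ?case
    by (simp only: dds_at.simps power_Suc mult.assoc)
qed

section \<open>Cycles and the encoding of graphs\<close>

lemma cyc_adj_imp_in_image: "cyc_adj N \<sigma> u v \<Longrightarrow> u \<in> \<sigma> ` {..<N} \<and> v \<in> \<sigma> ` {..<N}"
  unfolding cyc_adj_def by (metis imageI le_less_trans lessThan_iff mod_less_divisor not_less_zero not_le)

lemma one_cycle_edge_closed:
  assumes "one_cycle n x" "Z \<subseteq> {1..n}" "Z \<noteq> {}"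
    and closed: "\<And>u v. u \<in> Z \<Longrightarrow> v \<in> {1..n} \<Longrightarrow> edge n x u v \<Longrightarrow> v \<in> Z"
  shows "Z = {1..n}"
proof -
  obtain \<sigma> where "n \<ge> 3" and bij: "bij_betw \<sigma> {..<n} {1..n}"
    and E: "\<forall>u\<in>{1..n}. \<forall>v\<in>{1..n}. edge n x u v \<longleftrightarrow> cyc_adj n \<sigma> u v"
    using assms(1) unfolding one_cycle_def by blast
  have image: "\<sigma> ` {..<n} = {1..n}"
    using bij by (simp add: bij_betw_def)
  obtain j where "j < n" "\<sigma> j \<in> Z"
    using assms(2,3) image by (metis equals0I imageE lessThan_iff subsetD)
  have "\<sigma> ((j + t) mod n) \<in> Z" for t
  proof (induction t)
    case 0
    then show ?case
      using \<open>j < n\<close> \<open>\<sigma> j \<in> Z\<close> by simp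
  next
    case (Suc t)
    let ?i = "(j + t) mod n"
    have "?i < n" "(?i + 1) mod n < n"
      using \<open>n \<ge> 3\<close> by simp_all
    then have "cyc_adj n \<sigma> (\<sigma> ?i) (\<sigma> ((?i + 1) mod n))" "\<sigma> ((?i + 1) mod n) \<in> {1..n}"
      unfolding cyc_adj_def using image by blast+
    then have "\<sigma> ((?i + 1) mod n) \<in> Z"
      using closed[OF Suc.IH] E Suc.IH assms(2) by blast
    then show ?case
      by (simp add: mod_Suc_eq)
  qed
  moreover have "i = (j + (i + n - j)) mod n" if "i < n" for i
    using that \<open>j < n\<close> by simp
  ultimately have "\<sigma> ` {..<n} \<subseteq> Z"
    by (metis image_subsetI lessThan_iff)
  then show ?thesis
    using image assms(2) by blast
qed

lemma two_cycles_not_one_cycle: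
  assumes "two_cycles n x"
  shows "\<not> one_cycle n x"
proof
  assume one: "one_cycle n x"
  define h where "h = n div 2"
  obtain \<tau> where "even n" "h \<ge> 3" and bij: "bij_betw \<tau> {..<n} {1..n}"
    and E: "\<forall>u\<in>{1..n}. \<forall>v\<in>{1..n}. edge n x u v \<longleftrightarrow>
      cyc_adj h \<tau> u v \<or> cyc_adj h (\<lambda>i. \<tau> (h + i)) u v"
    using assms unfolding two_cycles_def h_def by blast
  have n: "n = h + h"
    using even_two_times_div_two[OF \<open>even n\<close>] unfolding h_def by simp
  define Q Q' where "Q = \<tau> ` {..<h}" and "Q' = (\<lambda>i. \<tau> (h + i)) ` {..<h}"
  have "Q \<inter> Q' = {}"
    using bij_betw_imp_inj_on[OF bij] unfolding Q_def Q'_def n by (fastforce dest: inj_onD)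
  moreover have "Q \<subseteq> {1..n}" "Q' \<subseteq> {1..n}" "Q \<noteq> {}" "Q' \<noteq> {}"
    using bij_betw_imp_surj_on[OF bij] \<open>h \<ge> 3\<close> unfolding Q_def Q'_def n by (auto simp: lessThan_empty_iff)
  moreover have "v \<in> Q" if "u \<in> Q" "v \<in> {1..n}" "edge n x u v" for u v
    using that E cyc_adj_imp_in_image \<open>Q \<inter> Q' = {}\<close> \<open>Q \<subseteq> {1..n}\<close> unfolding Q_def Q'_def by blast
  ultimately have "Q = {1..n}"
    using one_cycle_edge_closed[OF one] by blast
  then show False
    using \<open>Q \<inter> Q' = {}\<close> \<open>Q' \<subseteq> {1..n}\<close> \<open>Q' \<noteq> {}\<close> by blast
qed

lemma pair_idx_less:
  assumes "1 \<le> i" "i < j" "j \<le> n" "i < i'" "i' < j'"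
  shows "pair_idx n i j < pair_idx n i' j'"
proof -
  have "pair_idx n i j \<le> (\<Sum>a\<in>{1..<Suc i}. n - a)"
    using assms(1-3) by (simp add: pair_idx_def sum.atLeastLessThan_Suc)
  also have "\<dots> \<le> (\<Sum>a\<in>{1..<i'}. n - a)"
    using assms(4) by (intro sum_mono2) auto
  also have "\<dots> < pair_idx n i' j'"
    using assms(5) by (simp add: pair_idx_def)
  finally show ?thesis .
qed

lemma pair_idx_inj:
  assumes "1 \<le> i" "i < j" "j \<le> n" "1 \<le> i'" "i' < j'" "j' \<le> n"
    and "pair_idx n i j = pair_idx n i' j'"
  shows "i = i' \<and> j = j'"
proof -
  have "i = i'"
    using pair_idx_less[of i j n i' j'] pair_idx_less[of i' j' n i j] assms by (metis less_irrefl linorder_neqE_nat)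
  then show ?thesis
    using assms by (simp add: pair_idx_def)
qed

definition graph_bits :: "nat \<Rightarrow> nat set set \<Rightarrow> nat \<Rightarrow> bool" where
  "graph_bits n E k \<longleftrightarrow> (\<exists>u v. 1 \<le> u \<and> u < v \<and> v \<le> n \<and> pair_idx n u v = k \<and> {u, v} \<in> E)"

lemma graph_bits_pair_idx:
  assumes "1 \<le> u" "u < v" "v \<le> n"
  shows "graph_bits n E (pair_idx n u v) \<longleftrightarrow> {u, v} \<in> E"
  using assms pair_idx_inj[OF _ _ _ assms] unfolding graph_bits_def by blast

lemma edge_graph_bits:
  assumes "u \<in> {1..n}" "v \<in> {1..n}"
  shows "edge n (graph_bits n E) u v \<longleftrightarrow> u \<noteq> v \<and> {u, v} \<in> E"
proof -
  have "{min u v, max u v} = {u, v}"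
    by (auto simp: min_def max_def)
  moreover have "graph_bits n E (pair_idx n (min u v) (max u v)) \<longleftrightarrow> {min u v, max u v} \<in> E" if "u \<noteq> v"
    using that assms by (intro graph_bits_pair_idx) auto
  ultimately show ?thesis
    unfolding edge_def by auto
qed

lemma graph_bits_depends_only_on:
  assumes "0 < L" "\<And>M. \<exists>j<L. depends_only_on j (\<lambda>T. M \<in> E T)"
  shows "\<exists>j<L. depends_only_on j (\<lambda>T. graph_bits n (E T) k)"
proof (cases "\<exists>u v. 1 \<le> u \<and> u < v \<and> v \<le> n \<and> pair_idx n u v = k")
  case True
  then obtain u v where "1 \<le> u" "u < v" "v \<le> n" "k = pair_idx n u v"
    by blast
  then show ?thesis
    using assms(2)[of "{u, v}"] by (simp add: graph_bits_pair_idx depends_only_on_def)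
next
  case False
  then have "\<not> graph_bits n (E T) k" for T
    unfolding graph_bits_def by blast
  then show ?thesis
    using assms(1) by (auto simp: depends_only_on_def)
qed

definition path_edges :: "nat \<Rightarrow> (nat \<Rightarrow> 'a) \<Rightarrow> 'a set set" where
  "path_edges m \<sigma> = (\<lambda>i. {\<sigma> i, \<sigma> (Suc i)}) ` {..<m}"

definition cycle_edges :: "nat \<Rightarrow> (nat \<Rightarrow> 'a) \<Rightarrow> 'a set set" where
  "cycle_edges N \<sigma> = (\<lambda>i. {\<sigma> i, \<sigma> ((i + 1) mod N)}) ` {..<N}"

lemma cyc_adj_iff_cycle_edges: "cyc_adj N \<sigma> u v \<longleftrightarrow> {u, v} \<in> cycle_edges N \<sigma>"
  unfolding cyc_adj_def cycle_edges_def by (auto simp: doubleton_eq_iff)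

lemma path_edges_cong: "(\<And>i. i \<le> m \<Longrightarrow> \<sigma> i = \<tau> i) \<Longrightarrow> path_edges m \<sigma> = path_edges m \<tau>"
  unfolding path_edges_def by (intro image_cong) auto

lemma path_edges_0 [simp]: "path_edges 0 \<sigma> = {}"
  by (simp add: path_edges_def)

lemma path_edges_Suc: "path_edges (Suc m) \<sigma> = insert {\<sigma> m, \<sigma> (Suc m)} (path_edges m \<sigma>)"
  by (simp add: path_edges_def lessThan_Suc)

lemma path_edges_add:
  "path_edges (a + Suc b) \<sigma> = path_edges a \<sigma> \<union> insert {\<sigma> a, \<sigma> (Suc a)} (path_edges b (\<lambda>i. \<sigma> (Suc a + i)))"
  by (induction b) (auto simp: path_edges_Suc)

lemma cycle_edges_Suc: "cycle_edges (Suc m) \<sigma> = insert {\<sigma> m, \<sigma> 0} (path_edges m \<sigma>)"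
proof -
  have "(\<lambda>i. {\<sigma> i, \<sigma> ((i + 1) mod Suc m)}) ` {..<m} = path_edges m \<sigma>"
    unfolding path_edges_def by (intro image_cong) auto
  then show ?thesis
    unfolding cycle_edges_def lessThan_Suc by simp
qed

section \<open>The ladder\<close>

text \<open>Two rails \<open>vtop 0, \<dots>, vtop L\<close> and \<open>vbot L 0, \<dots>, vbot L L\<close> on the vertices \<open>1..2L+2\<close>, each
  closed by an edge from position \<open>L\<close> back to position \<open>0\<close>; the step from position \<open>i\<close> to \<open>i + 1\<close> is
  crossed iff \<open>i \<in> T\<close>. Starting at \<open>vtop 0\<close>, the walk reaches position \<open>i\<close> on the bottom rail iff
  it has crossed an odd number of times before.\<close>

definition vtop :: "nat \<Rightarrow> nat" where
  "vtop i = i + 1"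

definition vbot :: "nat \<Rightarrow> nat \<Rightarrow> nat" where
  "vbot L i = L + 2 + i"

definition ladder_step :: "nat \<Rightarrow> bool \<Rightarrow> nat \<Rightarrow> nat set set" where
  "ladder_step L c i =
    (if c then {{vtop i, vbot L (Suc i)}, {vbot L i, vtop (Suc i)}}
     else {{vtop i, vtop (Suc i)}, {vbot L i, vbot L (Suc i)}})"

definition ladder :: "nat \<Rightarrow> nat set \<Rightarrow> nat set set" where
  "ladder L T = (\<Union>i<L. ladder_step L (i \<in> T) i) \<union> {{vtop L, vtop 0}, {vbot L L, vbot L 0}}"

definition walk_top :: "nat \<Rightarrow> nat set \<Rightarrow> nat \<Rightarrow> nat" where
  "walk_top L T i = (if odd (card {j\<in>T. j < i}) then vbot L i else vtop i)"

definition walk_bot :: "nat \<Rightarrow> nat set \<Rightarrow> nat \<Rightarrow> nat" where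
  "walk_bot L T i = (if odd (card {j\<in>T. j < i}) then vtop i else vbot L i)"

definition walk :: "nat \<Rightarrow> nat set \<Rightarrow> nat \<Rightarrow> nat" where
  "walk L T k = (if k \<le> L then walk_top L T k else walk_bot L T (k - Suc L))"

lemma odd_card_less_Suc: "odd (card {j\<in>T. j < Suc i}) \<longleftrightarrow> odd (card {j\<in>T. j < i}) \<noteq> (i \<in> T)"
proof -
  have "{j\<in>T. j < Suc i} = (if i \<in> T then insert i {j\<in>T. j < i} else {j\<in>T. j < i})"
    by (auto simp: less_Suc_eq)
  then show ?thesis
    by simp
qed

lemma ladder_step_walk:
  "ladder_step L (i \<in> T) i =
    {{walk_top L T i, walk_top L T (Suc i)}, {walk_bot L T i, walk_bot L T (Suc i)}}"
  unfolding ladder_step_def walk_top_def walk_bot_def odd_card_less_Suc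
  by (cases "i \<in> T"; cases "odd (card {j\<in>T. j < i})") (simp_all add: insert_commute)

lemma ladder_eq_paths:
  "ladder L T = path_edges L (walk_top L T) \<union> path_edges L (walk_bot L T)
    \<union> {{vtop L, vtop 0}, {vbot L L, vbot L 0}}"
  unfolding ladder_def path_edges_def ladder_step_walk by blast

lemma walk_top_0 [simp]: "walk_top L T 0 = vtop 0"
  and walk_bot_0 [simp]: "walk_bot L T 0 = vbot L 0"
  by (simp_all add: walk_top_def walk_bot_def)

lemma walk_low: "k \<le> L \<Longrightarrow> walk L T k = walk_top L T k"
  and walk_high: "walk L T (Suc (L + i)) = walk_bot L T i"
  by (simp_all add: walk_def)

lemma path_edges_walk: "path_edges L (walk L T) = path_edges L (walk_top L T)"
  by (rule path_edges_cong) (simp add: walk_low)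

lemma ladder_odd:
  assumes "odd (card {j\<in>T. j < L})"
  shows "ladder L T = cycle_edges (2 * L + 2) (walk L T)"
proof -
  have "cycle_edges (2 * L + 2) (walk L T) = cycle_edges (Suc (L + Suc L)) (walk L T)"
    by (simp add: mult_2)
  also have "\<dots> = insert {walk_bot L T L, vtop 0}
      (path_edges L (walk_top L T) \<union> insert {walk_top L T L, vbot L 0} (path_edges L (walk_bot L T)))"
    unfolding cycle_edges_Suc path_edges_add path_edges_walk
    using walk_high[of L T 0] by (simp add: walk_low walk_high)
  also have "\<dots> = ladder L T"
    using assms by (auto simp: ladder_eq_paths walk_top_def walk_bot_def)
  finally show ?thesis ..
qed

lemma ladder_even:
  assumes "even (card {j\<in>T. j < L})"
  shows "ladder L T = cycle_edges (Suc L) (walk L T) \<union> cycle_edges (Suc L) (\<lambda>i. walk L T (Suc L + i))"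
proof -
  have "walk_top L T L = vtop L" "walk_bot L T L = vbot L L"
    using assms by (simp_all add: walk_top_def walk_bot_def)
  then have "cycle_edges (Suc L) (walk L T) = insert {vtop L, vtop 0} (path_edges L (walk_top L T))"
    and "cycle_edges (Suc L) (\<lambda>i. walk L T (Suc L + i)) = insert {vbot L L, vbot L 0} (path_edges L (walk_bot L T))"
    using walk_high[of L T 0] by (simp_all add: cycle_edges_Suc path_edges_walk walk_low walk_high)
  then show ?thesis
    by (auto simp: ladder_eq_paths)
qed

lemma walk_bij: "bij_betw (walk L T) {..<2 * L + 2} {1..2 * L + 2}"
proof -
  have rungs: "{walk L T i, walk L T (Suc (L + i))} = {vtop i, vbot L i}" if "i \<le> L" for i
    using that by (auto simp: walk_low walk_high walk_top_def walk_bot_def)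
  have "walk L T ` {..<2 * L + 2} \<subseteq> {1..2 * L + 2}"
    by (auto simp: walk_def walk_top_def walk_bot_def vtop_def vbot_def)
  moreover have "{1..2 * L + 2} \<subseteq> walk L T ` {..<2 * L + 2}"
  proof
    fix w assume w: "w \<in> {1..2 * L + 2}"
    obtain i where "i \<le> L" "w = vtop i \<or> w = vbot L i"
    proof (cases "w \<le> L + 1")
      case True
      then have "w - 1 \<le> L" "w = vtop (w - 1)"
        using w by (auto simp: vtop_def)
      then show ?thesis
        using that by blast
    next
      case False
      then have "w - (L + 2) \<le> L" "w = vbot L (w - (L + 2))"
        using w by (auto simp: vbot_def)
      then show ?thesis
        using that by blast
    qed
    then have "w \<in> {walk L T i, walk L T (Suc (L + i))}"
      using rungs by blast
    moreover have "i < 2 * L + 2" "Suc (L + i) < 2 * L + 2"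
      using \<open>i \<le> L\<close> by simp_all
    ultimately show "w \<in> walk L T ` {..<2 * L + 2}"
      by blast
  qed
  ultimately have image: "walk L T ` {..<2 * L + 2} = {1..2 * L + 2}"
    by blast
  then have "inj_on (walk L T) {..<2 * L + 2}"
    by (intro eq_card_imp_inj_on) simp_all
  with image show ?thesis
    unfolding bij_betw_def by blast
qed

lemma ladder_edge_neq:
  assumes "0 < L" "{u, v} \<in> ladder L T"
  shows "u \<noteq> v"
proof
  assume "u = v"
  have "{u} \<notin> ladder_step L c i" for c i
    using assms(1) by (auto simp: ladder_step_def vtop_def vbot_def)
  moreover have "{u} \<noteq> {vtop L, vtop 0}" "{u} \<noteq> {vbot L L, vbot L 0}"
    using assms(1) by (auto simp: vtop_def vbot_def)
  moreover have "{u} \<in> ladder L T"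
    using assms(2) \<open>u = v\<close> by simp
  ultimately show False
    unfolding ladder_def by blast
qed

lemma edge_ladder:
  assumes "0 < L" "u \<in> {1..2 * L + 2}" "v \<in> {1..2 * L + 2}"
  shows "edge (2 * L + 2) (graph_bits (2 * L + 2) (ladder L T)) u v \<longleftrightarrow> {u, v} \<in> ladder L T"
  using assms(2,3) ladder_edge_neq[OF assms(1)] edge_graph_bits by blast

definition rail_position :: "nat \<Rightarrow> nat \<Rightarrow> nat" where
  "rail_position L w = (if w \<le> L + 1 then w - 1 else w - (L + 2))"

lemma sum_rail_position_ladder_step:
  assumes "M \<in> ladder_step L c i" "i < L"
  shows "(\<Sum>w\<in>M. rail_position L w) = 2 * i + 1"
proof -
  have "rail_position L (vtop i) = i" "rail_position L (vtop (Suc i)) = Suc i"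
    "rail_position L (vbot L i) = i" "rail_position L (vbot L (Suc i)) = Suc i"
    using assms(2) by (simp_all add: rail_position_def vtop_def vbot_def)
  moreover have "vtop i \<noteq> vbot L (Suc i)" "vbot L i \<noteq> vtop (Suc i)"
    "vtop i \<noteq> vtop (Suc i)" "vbot L i \<noteq> vbot L (Suc i)"
    using assms(2) by (simp_all add: vtop_def vbot_def)
  ultimately show ?thesis
    using assms(1) by (cases c) (auto simp: ladder_step_def)
qed

lemma ladder_step_index_unique:
  "M \<in> ladder_step L c i \<Longrightarrow> M \<in> ladder_step L c' i' \<Longrightarrow> i < L \<Longrightarrow> i' < L \<Longrightarrow> i = i'"
  using sum_rail_position_ladder_step[of M L c i] sum_rail_position_ladder_step[of M L c' i'] by simp

lemma ladder_depends_only_on: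
  assumes "0 < L"
  shows "\<exists>j<L. depends_only_on j (\<lambda>T. M \<in> ladder L T)"
proof (cases "\<exists>i<L. \<exists>c. M \<in> ladder_step L c i")
  case True
  then obtain i c where "i < L" "M \<in> ladder_step L c i"
    by blast
  then have "M \<in> ladder L T \<longleftrightarrow> M \<in> ladder_step L (i \<in> T) i \<or> M \<in> {{vtop L, vtop 0}, {vbot L L, vbot L 0}}"
    for T
    unfolding ladder_def using ladder_step_index_unique by blast
  then show ?thesis
    using \<open>i < L\<close> by (auto simp: depends_only_on_def)
next
  case False
  then have "M \<in> ladder L T \<longleftrightarrow> M \<in> {{vtop L, vtop 0}, {vbot L L, vbot L 0}}" for T
    unfolding ladder_def by blast
  then show ?thesis
    using assms by (auto simp: depends_only_on_def)
qed

lemma one_cycle_ladder: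
  assumes "2 \<le> L" "odd (card {j\<in>T. j < L})"
  shows "one_cycle (2 * L + 2) (graph_bits (2 * L + 2) (ladder L T))"
  unfolding one_cycle_def
proof (intro conjI exI[of _ "walk L T"] ballI)
  show "3 \<le> 2 * L + 2" "bij_betw (walk L T) {..<2 * L + 2} {1..2 * L + 2}"
    using assms(1) walk_bij by simp_all
  fix u v assume "u \<in> {1..2 * L + 2}" "v \<in> {1..2 * L + 2}"
  then show "edge (2 * L + 2) (graph_bits (2 * L + 2) (ladder L T)) u v
      \<longleftrightarrow> cyc_adj (2 * L + 2) (walk L T) u v"
    unfolding cyc_adj_iff_cycle_edges ladder_odd[OF assms(2), symmetric]
    using assms(1) by (intro edge_ladder) auto
qed

lemma two_cycles_ladder:
  assumes "2 \<le> L" "even (card {j\<in>T. j < L})"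
  shows "two_cycles (2 * L + 2) (graph_bits (2 * L + 2) (ladder L T))"
proof -
  have half: "(2 * L + 2) div 2 = Suc L"
    by simp
  show ?thesis
    unfolding two_cycles_def half
  proof (intro conjI exI[of _ "walk L T"] ballI)
    show "even (2 * L + 2)" "3 \<le> Suc L" "bij_betw (walk L T) {..<2 * L + 2} {1..2 * L + 2}"
      using assms(1) walk_bij by simp_all
    fix u v assume "u \<in> {1..2 * L + 2}" "v \<in> {1..2 * L + 2}"
    then show "edge (2 * L + 2) (graph_bits (2 * L + 2) (ladder L T)) u v
        \<longleftrightarrow> cyc_adj (Suc L) (walk L T) u v \<or> cyc_adj (Suc L) (\<lambda>i. walk L T (Suc L + i)) u v"
      unfolding cyc_adj_iff_cycle_edges Un_iff[symmetric] ladder_even[OF assms(2), symmetric]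
      using assms(1) by (intro edge_ladder) auto
  qed
qed

lemma Delta_ladder:
  assumes "2 \<le> L"
  shows "Delta (2 * L + 2) (graph_bits (2 * L + 2) (ladder L T))"
  using one_cycle_ladder[OF assms] two_cycles_ladder[OF assms] unfolding Delta_def by blast

lemma one_v_two_cycle_ladder:
  assumes "2 \<le> L"
  shows "one_v_two_cycle (2 * L + 2) (graph_bits (2 * L + 2) (ladder L T)) \<longleftrightarrow> odd (card {j\<in>T. j < L})"
  using one_cycle_ladder[OF assms] two_cycles_ladder[OF assms] two_cycles_not_one_cycle
  unfolding one_v_two_cycle_def by blast

lemma ampc_one_v_two_cycle_ladder_bound:
  fixes A :: "nat \<Rightarrow> 'm::finite \<Rightarrow> ('k, 'w) strategy"
  assumes "2 \<le> L" "n = 2 * L + 2"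
    and valid: "ampc_valid S n A R"
    and computes: "ampc_computes S n A R (Delta n) (one_v_two_cycle n)"
  shows "L \<le> (S * (S + 1)) ^ R"
proof -
  have "\<exists>j<L. depends_only_on j (\<lambda>T. graph_bits n (ladder L T) k)" for k
    using assms(1) by (intro graph_bits_depends_only_on ladder_depends_only_on) simp_all
  then have "cube_deg_le L ((S * (S + 1)) ^ R)
      (\<lambda>T. of_bool (dds_at S n A (graph_bits n (ladder L T)) R Answer = {#Bit True#}))"
    using valid by (rule cube_deg_le_dds_at) simp
  moreover have "of_bool (dds_at S n A (graph_bits n (ladder L T)) R Answer = {#Bit True#}) =
      (of_bool (odd (card T)) :: real)" if "T \<subseteq> {..<L}" for T
  proof -
    have "{j\<in>T. j < L} = T"
      using that by auto
    then have "dds_at S n A (graph_bits n (ladder L T)) R Answer = {#Bit (odd (card T))#}"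
      using computes Delta_ladder[OF assms(1)] one_v_two_cycle_ladder[OF assms(1)]
      unfolding ampc_computes_def assms(2) by simp
    then show ?thesis
      by simp
  qed
  ultimately have "cube_deg_le L ((S * (S + 1)) ^ R) (\<lambda>T. of_bool (odd (card T)))"
    by (rule cube_deg_le_cong)
  then show ?thesis
    using parity_not_cube_deg_le not_le by blast
qed

lemma ampc_one_v_two_cycle_vertices_bound:
  fixes A :: "nat \<Rightarrow> 'm::finite \<Rightarrow> ('k, 'w) strategy"
  assumes "even n" "S \<ge> 2"
    and "ampc_valid S n A R"
    and "ampc_computes S n A R (Delta n) (one_v_two_cycle n)"
  shows "n \<le> 32 * S ^ (3 * R)"
proof (cases "n < 6")
  case True
  moreover have "1 \<le> S ^ (3 * R)"
    using assms(2) by simp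
  ultimately show ?thesis
    by linarith
next
  case False
  define L where "L = n div 2 - 1"
  have "2 \<le> L" "n = 2 * L + 2"
    using False \<open>even n\<close> unfolding L_def by auto
  then have "L \<le> (S * (S + 1)) ^ R"
    using assms(3,4) by (rule ampc_one_v_two_cycle_ladder_bound)
  also have "\<dots> \<le> (S ^ 3) ^ R"
  proof (rule power_mono)
    have "S + 1 \<le> S * S"
      using mult_le_mono1[OF assms(2), of S] assms(2) by linarith
    then show "S * (S + 1) \<le> S ^ 3"
      unfolding power3_eq_cube mult.assoc by (rule mult_le_mono2)
  qed simp
  finally have "L \<le> S ^ (3 * R)"
    by (simp add: power_mult)
  moreover have "1 \<le> S ^ (3 * R)"
    using assms(2) by simp
  ultimately show ?thesis
    using \<open>n = 2 * L + 2\<close> by linarith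
qed

theorem theorem4p7:
  fixes n S R :: nat
    and A :: "nat \<Rightarrow> 'm::finite \<Rightarrow> ('k, 'w) strategy"
  assumes "even n"
    and "S \<ge> 2"
    and "ampc_valid S n A R"
    and "ampc_computes S n A R (Delta n) (one_v_two_cycle n)"
  shows "real R \<ge> log (real S) (real n) / 3 - log (real S) 32 / 3"
proof -
  have S: "1 < real S"
    using assms(2) by simp
  have "log (real S) (real n) \<le> log (real S) 32 + 3 * real R"
  proof (cases "n = 0")
    case True
    then show ?thesis
      using S by (simp add: log_def)
  next
    case False
    have "real n \<le> real (32 * S ^ (3 * R))"
      using ampc_one_v_two_cycle_vertices_bound[OF assms] by (rule of_nat_mono)
    then have "log (real S) (real n) \<le> log (real S) (32 * real S ^ (3 * R))"
      using S False by simp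
    then show ?thesis
      using S by (simp add: log_mult log_nat_power)
  qed
  then show ?thesis
    by simp
qed

end
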